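(* Let $A,B,C \subset \mathbb{R}$ be finite sets such that $|A| \approx |C|$. Then $$\sum_{a \in A} E^{\times}(B,C-a) \ll E^{\times}(B)^{1/2}|A|^2\log^{1/2}|A|+|A|^3+|A||B|^2,$$ where the implied constant depends only on the implied constants in $|A|\approx|C|$.
   Context: For finite $X,Y\subset\mathbb{R}$, the multiplicative energy $E^{\times}(X,Y)$ is the number of solutions of $\frac{x_1}{y_1}=\frac{x_2}{y_2}$ with $x_1,x_2\in X$, $y_1,y_2\in Y$; $E^\times(X)=E^\times(X,X)$. $C-a=\{c-a: c\in C\}$. $X\ll Y$ means $X\le cY$ for a constant $c>0$; $X\approx Y$ means both $X\ll Y$ and $Y\ll X$. Logarithms are base 2. *)

theory Defs
  imports Complex_Main
begin

text \<open>Multiplicative energy: number of solutions of x1/y1 = x2/y2 with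
  x1,x2 in X and y1,y2 in Y; quotients only make sense for nonzero y.\<close>
definition mult_energy :: "real set \<Rightarrow> real set \<Rightarrow> nat" where
  "mult_energy X Y = card {(x1, x2, y1, y2). x1 \<in> X \<and> x2 \<in> X \<and> y1 \<in> Y \<and> y2 \<in> Y
      \<and> y1 \<noteq> 0 \<and> y2 \<noteq> 0 \<and> x1 / y1 = x2 / y2}"

end

theory Submission
  imports Defs "HOL-Analysis.L2_Norm" "HOL-Analysis.Harmonic_Numbers"
begin

text \<open>Summed over \<open>a \<in> A\<close>, the energies count solutions of \<open>x\<^sub>1 / (c\<^sub>1 - a) = x\<^sub>2 / (c\<^sub>2 - a)\<close>.
  Those with \<open>x\<^sub>1 = 0\<close> number at most \<open>|A| |C|\<^sup>2\<close>; the others say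
  \<open>x\<^sub>1 / x\<^sub>2 = (c\<^sub>1 - a) / (c\<^sub>2 - a)\<close>, so Cauchy-Schwarz over the common value bounds them by
  \<open>E\<^sup>\<times>(B)\<^sup>1\<^sup>/\<^sup>2 T\<^sup>1\<^sup>/\<^sup>2\<close>, where \<open>T\<close> counts pairs of triples \<open>(a, c\<^sub>1, c\<^sub>2)\<close>, \<open>(a', c\<^sub>1', c\<^sub>2')\<close>
  with equal ratios. Equal ratios mean that an affine map \<open>x \<mapsto> s x + b\<close>, \<open>s \<noteq> 0\<close>, sends one
  triple to the other, i.e. the three points \<open>(a, a')\<close>, \<open>(c\<^sub>1, c\<^sub>1')\<close>, \<open>(c\<^sub>2, c\<^sub>2')\<close> of the grid
  \<open>D \<times> D\<close>, \<open>D = A \<union> C\<close>, lie on one line; hence \<open>T \<le> \<Sum>\<^sub>\<ell> |\<ell> \<inter> D\<^sup>2|\<^sup>3\<close>. An elementary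
  Szemeredi-Trotter bound for grids, at most \<open>O(|D|\<^sup>4 / j\<^sup>3)\<close> lines contain \<open>j\<close> grid points,
  then gives \<open>T = O(|D|\<^sup>4 log |D|)\<close>.\<close>

definition next_elem :: "real set \<Rightarrow> real \<Rightarrow> real" where
  "next_elem X x = Min {y \<in> X. x < y}"

definition gap :: "real set \<Rightarrow> real \<Rightarrow> real \<Rightarrow> nat" where
  "gap D u v = card (D \<inter> {min u v..<max u v})"

lemma next_elem:
  assumes "finite X" "x \<in> X" "x \<noteq> Max X"
  shows "next_elem X x \<in> X" "x < next_elem X x" "\<And>y. y \<in> X \<Longrightarrow> x < y \<Longrightarrow> next_elem X x \<le> y"
proof -
  have "x < Max X" "Max X \<in> X" using assms by (auto intro: le_neq_trans Max_in)
  hence ne: "{y \<in> X. x < y} \<noteq> {}" by auto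
  have fin: "finite {y \<in> X. x < y}" using assms by auto
  show "next_elem X x \<in> X" "x < next_elem X x"
    using Min_in[OF fin ne] unfolding next_elem_def by auto
  show "next_elem X x \<le> y" if "y \<in> X" "x < y" for y
    unfolding next_elem_def using fin that by (intro Min_le) auto
qed

lemma gap_commute: "gap D u v = gap D v u"
  unfolding gap_def by (simp add: min.commute max.commute)

lemma sum_gap_next_elem_le_card:
  fixes h :: "real \<Rightarrow> real"
  assumes "finite D" "finite X" and mono: "strict_mono_on X h \<or> strict_antimono_on X h"
  shows "(\<Sum>x\<in>X - {Max X}. gap D (h x) (h (next_elem X x))) \<le> card D"
proof -
  define I where "I x = D \<inter> {min (h x) (h (next_elem X x))..<max (h x) (h (next_elem X x))}" for x
  have disjoint: "I x \<inter> I y = {}" if xy: "x \<in> X - {Max X}" "y \<in> X - {Max X}" "x < y" for x y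
  proof -
    have "next_elem X x \<in> X" "next_elem X y \<in> X"
      and order: "x < next_elem X x" "next_elem X x \<le> y" "y < next_elem X y"
      using next_elem[OF \<open>finite X\<close>] xy by auto
    from mono consider
        "h x < h (next_elem X x)" "h (next_elem X x) \<le> h y" "h y < h (next_elem X y)"
      | "h (next_elem X x) < h x" "h y \<le> h (next_elem X x)" "h (next_elem X y) < h y"
    proof
      assume "strict_mono_on X h"
      then show ?thesis using that(1) xy order \<open>next_elem X x \<in> X\<close> \<open>next_elem X y \<in> X\<close>
        by (auto simp: monotone_on_def le_less)
    next
      assume "strict_antimono_on X h"
      then show ?thesis using that(2) xy order \<open>next_elem X x \<in> X\<close> \<open>next_elem X y \<in> X\<close>
        by (auto simp: monotone_on_def le_less)
    qed
    then show ?thesis unfolding I_def by cases (auto simp: min_def max_def)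
  qed
  have "I x \<inter> I y = {}" if "x \<in> X - {Max X}" "y \<in> X - {Max X}" "x \<noteq> y" for x y
    using that disjoint[of x y] disjoint[of y x] by (cases "x < y") auto
  then have "(\<Sum>x\<in>X - {Max X}. gap D (h x) (h (next_elem X x))) = card (\<Union>x\<in>X - {Max X}. I x)"
    unfolding gap_def I_def using assms by (subst card_UN_disjoint) auto
  also have "\<dots> \<le> card D" using assms(1) by (intro card_mono) (auto simp: I_def)
  finally show ?thesis .
qed

lemma card_close_above_le:
  assumes "finite D" "u \<in> D"
  shows "card {v \<in> D. u < v \<and> gap D u v \<le> g} \<le> g"
proof -
  let ?V = "{v \<in> D. u < v \<and> gap D u v \<le> g}"
  have "strict_mono_on ?V (gap D u)"
  proof (rule strict_mono_onI)
    fix v v' assume "v \<in> ?V" "v' \<in> ?V" "v < v'"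
    then have "D \<inter> {u..<v} \<subset> D \<inter> {u..<v'}" by auto
    then show "gap D u v < gap D u v'"
      using \<open>v \<in> ?V\<close> \<open>v' \<in> ?V\<close> \<open>finite D\<close> unfolding gap_def by (auto intro: psubset_card_mono)
  qed
  then have "inj_on (gap D u) ?V" by (rule strict_mono_on_imp_inj_on)
  moreover have "gap D u ` ?V \<subseteq> {1..g}"
  proof clarify
    fix v assume "v \<in> D" "u < v" "gap D u v \<le> g"
    then have "u \<in> D \<inter> {min u v..<max u v}" using \<open>u \<in> D\<close> by auto
    then have "gap D u v \<noteq> 0" using \<open>finite D\<close> unfolding gap_def by auto
    with \<open>gap D u v \<le> g\<close> show "gap D u v \<in> {1..g}" by simp
  qed
  ultimately show ?thesis by (metis card_atLeastAtMost card_inj_on_le diff_Suc_1 finite_atLeastAtMost)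
qed

lemma card_close_pairs_less_le:
  assumes "finite D"
  shows "card {(u, v). u \<in> D \<and> v \<in> D \<and> u < v \<and> gap D u v \<le> g} \<le> card D * g"
proof -
  have "{(u, v). u \<in> D \<and> v \<in> D \<and> u < v \<and> gap D u v \<le> g} = (SIGMA u:D. {v \<in> D. u < v \<and> gap D u v \<le> g})"
    by auto
  also have "card \<dots> = (\<Sum>u\<in>D. card {v \<in> D. u < v \<and> gap D u v \<le> g})"
    using assms by (intro card_SigmaI) auto
  also have "\<dots> \<le> (\<Sum>u\<in>D. g)" by (intro sum_mono card_close_above_le[OF assms])
  finally show ?thesis by simp
qed

lemma card_close_pairs_le:
  assumes "finite D"
  shows "card {(u, v). u \<in> D \<and> v \<in> D \<and> u \<noteq> v \<and> gap D u v \<le> g} \<le> 2 * card D * g"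
proof -
  let ?P = "{(u, v). u \<in> D \<and> v \<in> D \<and> u < v \<and> gap D u v \<le> g}"
  have fin: "finite ?P" by (rule finite_subset[of _ "D \<times> D"]) (use assms in auto)
  have "{(u, v). u \<in> D \<and> v \<in> D \<and> u \<noteq> v \<and> gap D u v \<le> g} \<subseteq> ?P \<union> prod.swap ` ?P"
  proof
    fix p assume "p \<in> {(u, v). u \<in> D \<and> v \<in> D \<and> u \<noteq> v \<and> gap D u v \<le> g}"
    then obtain u v where uv: "p = (u, v)" "u \<in> D" "v \<in> D" "u \<noteq> v" "gap D u v \<le> g" by blast
    show "p \<in> ?P \<union> prod.swap ` ?P"
    proof (cases "u < v")
      case True
      with uv show ?thesis by blast
    next
      case False
      with uv have "(v, u) \<in> ?P" by (simp add: gap_commute)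
      then have "(u, v) \<in> prod.swap ` ?P" using imageI[of "(v, u)" ?P prod.swap] by simp
      then show ?thesis unfolding uv(1) by (rule UnI2)
    qed
  qed
  then have "card {(u, v). u \<in> D \<and> v \<in> D \<and> u \<noteq> v \<and> gap D u v \<le> g} \<le> card (?P \<union> prod.swap ` ?P)"
    using fin by (simp add: card_mono)
  also have "\<dots> \<le> card ?P + card (prod.swap ` ?P)" by (rule card_Un_le)
  also have "\<dots> \<le> 2 * card D * g"
    using card_close_pairs_less_le[OF assms, of g] card_image_le[OF fin, of prod.swap] by linarith
  finally show ?thesis .
qed

text \<open>The points of the grid \<open>D \<times> D\<close> on the line \<open>y = s x + b\<close>, recorded by their first coordinates.\<close>

definition line_section :: "real set \<Rightarrow> real \<Rightarrow> real \<Rightarrow> real set" where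
  "line_section D s b = {x \<in> D. s * x + b \<in> D}"

definition rich_lines :: "real set \<Rightarrow> nat \<Rightarrow> (real \<times> real) set" where
  "rich_lines D j = {(s, b). s \<noteq> 0 \<and> j \<le> card (line_section D s b)}"

lemma card_line_section_le: "finite D \<Longrightarrow> card (line_section D s b) \<le> card D"
  unfolding line_section_def by (intro card_mono) auto

lemma finite_rich_lines:
  assumes "finite D" "2 \<le> j"
  shows "finite (rich_lines D j)"
proof -
  define slope_icpt where
    "slope_icpt = (\<lambda>(x, x', y, y'). ((y' - y) / (x' - x), y - (y' - y) / (x' - x) * x :: real))"
  have "rich_lines D j \<subseteq> slope_icpt ` (D \<times> D \<times> D \<times> D)"
  proof
    fix p assume "p \<in> rich_lines D j"
    then obtain s b where p: "p = (s, b)" "2 \<le> card (line_section D s b)"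
      using assms(2) unfolding rich_lines_def by auto
    then obtain S where "S \<subseteq> line_section D s b" "card S = 2" by (meson ex_card)
    then obtain x x' where xx: "x \<in> line_section D s b" "x' \<in> line_section D s b" "x \<noteq> x'"
      by (auto simp: card_2_iff)
    then have "slope_icpt (x, x', s * x + b, s * x' + b) = (s, b)"
      unfolding slope_icpt_def by (simp add: field_simps)
    moreover have "(x, x', s * x + b, s * x' + b) \<in> D \<times> D \<times> D \<times> D"
      using xx unfolding line_section_def by auto
    ultimately show "p \<in> slope_icpt ` (D \<times> D \<times> D \<times> D)" using p(1) by (metis rev_image_eqI)
  qed
  moreover have "finite (D \<times> D \<times> D \<times> D)" using assms(1) by simp
  ultimately show ?thesis by (meson finite_surj)
qed

text \<open>On a line with \<open>j\<close> grid points, all but \<open>2 |D| / (g + 1)\<close> consecutive pairs are close in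
  both coordinates, because the gaps along each coordinate add up to at most \<open>|D|\<close>. A close step
  determines its line, and there are only \<open>O(|D| g)\<close> close pairs in each coordinate.\<close>

definition close_steps :: "real set \<Rightarrow> nat \<Rightarrow> real \<Rightarrow> real \<Rightarrow> real set" where
  "close_steps D g s b = {x \<in> line_section D s b - {Max (line_section D s b)}.
     gap D x (next_elem (line_section D s b) x) \<le> g \<and>
     gap D (s * x + b) (s * next_elem (line_section D s b) x + b) \<le> g}"

lemma card_large_values_mult_le:
  fixes f :: "'a \<Rightarrow> nat"
  assumes "finite X"
  shows "card {x \<in> X. g < f x} * (g + 1) \<le> (\<Sum>x\<in>X. f x)"
proof -
  have "card {x \<in> X. g < f x} * (g + 1) = (\<Sum>x\<in>{x \<in> X. g < f x}. g + 1)" by simp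
  also have "\<dots> \<le> (\<Sum>x\<in>{x \<in> X. g < f x}. f x)" by (intro sum_mono) auto
  also have "\<dots> \<le> (\<Sum>x\<in>X. f x)" using assms by (intro sum_mono2) auto
  finally show ?thesis .
qed

lemma card_close_steps_ge:
  assumes "finite D" "s \<noteq> 0"
  shows "real (card (line_section D s b)) - 1 - 2 * real (card D) / (real g + 1)
           \<le> real (card (close_steps D g s b))"
proof -
  define X where "X = line_section D s b"
  define far where "far h = {x \<in> X - {Max X}. g < gap D (h x) (h (next_elem X x))}" for h
  have finX: "finite X" using assms(1) unfolding X_def line_section_def by simp
  have far_le: "real (card (far h)) \<le> real (card D) / (real g + 1)"
    if "strict_mono_on X h \<or> strict_antimono_on X h" for h
  proof -
    have "card (far h) * (g + 1) \<le> card D"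
      unfolding far_def using card_large_values_mult_le[OF finite_Diff[OF finX]]
        sum_gap_next_elem_le_card[OF assms(1) finX that] by (rule order_trans)
    then have "real (card (far h)) * (real g + 1) \<le> real (card D)"
      by (metis of_nat_1 of_nat_add of_nat_le_iff of_nat_mult)
    then show ?thesis by (simp add: field_simps)
  qed
  have id_mono: "strict_mono_on X (\<lambda>x. x)" by (rule strict_mono_onI)
  have line_mono: "strict_mono_on X (\<lambda>x. s * x + b) \<or> strict_antimono_on X (\<lambda>x. s * x + b)"
    using assms(2) by (cases "s > 0") (auto simp: monotone_on_def)
  have "real (card (far (\<lambda>x. x))) + real (card (far (\<lambda>x. s * x + b)))
      \<le> real (card D) / (real g + 1) + real (card D) / (real g + 1)"
    using far_le[OF disjI1[OF id_mono]] far_le[OF line_mono] by (rule add_mono)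
  also have "\<dots> = 2 * real (card D) / (real g + 1)" by simp
  finally have "real (card (far (\<lambda>x. x))) + real (card (far (\<lambda>x. s * x + b)))
      \<le> 2 * real (card D) / (real g + 1)" .
  moreover have "card X \<le> card (X - {Max X}) + 1"
    by (simp add: card_Diff_singleton_if) arith
  moreover have "card (X - {Max X}) \<le> card (close_steps D g s b \<union> far (\<lambda>x. x) \<union> far (\<lambda>x. s * x + b))"
    using finX unfolding close_steps_def far_def X_def by (intro card_mono) auto
  moreover have "\<dots> \<le> card (close_steps D g s b) + card (far (\<lambda>x. x)) + card (far (\<lambda>x. s * x + b))"
    by (meson card_Un_le add_le_mono1 order_trans)
  ultimately show ?thesis unfolding X_def by linarith
qed

lemma card_Sigma_close_steps_le:
  assumes "finite D" "\<And>p. p \<in> L \<Longrightarrow> fst p \<noteq> 0"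
  shows "card (SIGMA p:L. close_steps D g (fst p) (snd p)) \<le> (card D * g) * (2 * card D * g)"
proof -
  define S where "S = (SIGMA p:L. close_steps D g (fst p) (snd p))"
  define nxt where "nxt p = next_elem (line_section D (fst p) (snd p))" for p
  define step where
    "step = (\<lambda>(p, x). ((x, nxt p x), (fst p * x + snd p, fst p * nxt p x + snd p)))"
  define P where "P = {(u, v). u \<in> D \<and> v \<in> D \<and> u < v \<and> gap D u v \<le> g}"
  define Q where "Q = {(u, v). u \<in> D \<and> v \<in> D \<and> u \<noteq> v \<and> gap D u v \<le> g}"
  have nxt: "nxt p x \<in> line_section D (fst p) (snd p)" "x < nxt p x"
    if "p \<in> L" "x \<in> close_steps D g (fst p) (snd p)" for p x
    using that next_elem[of "line_section D (fst p) (snd p)" x] assms(1)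
    unfolding nxt_def close_steps_def line_section_def by auto
  have "inj_on step S"
  proof (rule inj_onI)
    fix q q' assume "q \<in> S" "q' \<in> S" "step q = step q'"
    moreover obtain s b x s' b' x' where "q = ((s, b), x)" "q' = ((s', b'), x')" by (metis prod.collapse)
    ultimately have "x = x'" "x < nxt (s, b) x" "s * x + b = s' * x + b'"
      "s * nxt (s, b) x + b = s' * nxt (s, b) x + b'"
      using nxt[of "(s, b)" x] unfolding S_def step_def by auto
    then have "(s - s') * (nxt (s, b) x - x) = 0" by (simp add: algebra_simps)
    with \<open>x < nxt (s, b) x\<close> have "s = s'" by simp
    with \<open>s * x + b = s' * x + b'\<close> \<open>q = _\<close> \<open>q' = _\<close> \<open>x = x'\<close> show "q = q'" by simp
  qed
  moreover have "step ` S \<subseteq> P \<times> Q"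
  proof (rule image_subsetI)
    fix q assume "q \<in> S"
    then obtain s b x where q: "q = ((s, b), x)" "(s, b) \<in> L" "x \<in> close_steps D g s b"
      unfolding S_def by auto
    then show "step q \<in> P \<times> Q"
      using nxt[of "(s, b)" x] assms(2)[of "(s, b)"]
      unfolding step_def P_def Q_def close_steps_def line_section_def nxt_def by auto
  qed
  moreover have "finite (P \<times> Q)"
    unfolding P_def Q_def by (rule finite_subset[of _ "(D \<times> D) \<times> (D \<times> D)"]) (use assms(1) in auto)
  ultimately have "card S \<le> card P * card Q"
    by (metis card_cartesian_product card_image card_mono)
  also have "\<dots> \<le> (card D * g) * (2 * card D * g)"
    using card_close_pairs_less_le[OF assms(1)] card_close_pairs_le[OF assms(1)]
    unfolding P_def Q_def by (intro mult_mono) auto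
  finally show ?thesis unfolding S_def .
qed

lemma card_rich_lines_mult_le:
  assumes "finite D" "2 \<le> j"
  shows "real (card (rich_lines D j)) * (real j - 1 - 2 * real (card D) / (real g + 1))
           \<le> 2 * real (card D) ^ 2 * real g ^ 2"
proof -
  define L where "L = rich_lines D j"
  have fin_steps: "finite (close_steps D g s b)" for s b
    using assms(1) unfolding close_steps_def line_section_def by simp
  have "real (card L) * (real j - 1 - 2 * real (card D) / (real g + 1))
      = (\<Sum>p\<in>L. real j - 1 - 2 * real (card D) / (real g + 1))" by simp
  also have "\<dots> \<le> (\<Sum>p\<in>L. real (card (close_steps D g (fst p) (snd p))))"
  proof (rule sum_mono)
    fix p assume "p \<in> L"
    then have "fst p \<noteq> 0" "j \<le> card (line_section D (fst p) (snd p))"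
      unfolding L_def rich_lines_def by auto
    then show "real j - 1 - 2 * real (card D) / (real g + 1) \<le> real (card (close_steps D g (fst p) (snd p)))"
      using card_close_steps_ge[OF assms(1), of "fst p" "snd p" g] by linarith
  qed
  also have "\<dots> = real (card (SIGMA p:L. close_steps D g (fst p) (snd p)))"
    using finite_rich_lines[OF assms] fin_steps unfolding L_def by (simp add: card_SigmaI)
  also have "\<dots> \<le> real ((card D * g) * (2 * card D * g))"
  proof -
    have "fst p \<noteq> 0" if "p \<in> L" for p using that unfolding L_def rich_lines_def by auto
    then have "card (SIGMA p:L. close_steps D g (fst p) (snd p)) \<le> (card D * g) * (2 * card D * g)"
      by (rule card_Sigma_close_steps_le[OF assms(1)])
    then show ?thesis by (simp only: of_nat_le_iff)
  qed
  also have "\<dots> = 2 * real (card D) ^ 2 * real g ^ 2" by (simp add: power2_eq_square)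
  finally show ?thesis unfolding L_def .
qed

lemma card_rich_lines_le:
  assumes "finite D" "2 \<le> j"
  shows "real (card (rich_lines D j)) \<le> 800 * real (card D) ^ 4 / real j ^ 3"
proof (cases "j \<le> card D")
  case False
  then have "\<not> j \<le> card (line_section D s b)" for s b
    using card_line_section_le[OF assms(1), of s b] by linarith
  then show ?thesis unfolding rich_lines_def by simp
next
  case True
  define N where "N = real (card D)"
  define t where "t = real j - 1"
  \<comment> \<open>This choice makes the loss \<open>2 N / (g + 1)\<close> at most \<open>t / 2\<close>.\<close>
  define g where "g = nat \<lceil>4 * N / t\<rceil>"
  have t: "1 \<le> t" "t \<le> N" "real j \<le> 2 * t" using assms(2) True unfolding t_def N_def by auto
  have g_lower': "4 * N / t \<le> real g" unfolding g_def by linarith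
  then have g_lower: "4 * N \<le> real g * t" using t by (simp add: pos_divide_le_eq)
  have g_upper: "real g \<le> 5 * N / t"
  proof -
    have "real g \<le> 4 * N / t + 1" unfolding g_def using t by (simp add: ceiling_le_iff)
    moreover have "1 \<le> N / t" using t by simp
    ultimately show ?thesis by simp
  qed
  have "4 \<le> 4 * N / t" using t by (simp add: le_divide_eq)
  with g_lower' have "4 \<le> real g" by linarith
  then have "2 * N / (real g + 1) \<le> t / 2"
    using g_lower t by (simp add: field_simps)
  then have "real (card (rich_lines D j)) * (t / 2)
      \<le> real (card (rich_lines D j)) * (t - 2 * N / (real g + 1))"
    by (intro mult_left_mono) auto
  also have "\<dots> \<le> 2 * N ^ 2 * real g ^ 2"
    using card_rich_lines_mult_le[OF assms, of g] unfolding t_def N_def .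
  also have "\<dots> \<le> 2 * N ^ 2 * (5 * N / t) ^ 2"
    using g_upper by (intro mult_left_mono power_mono) auto
  finally have "real (card (rich_lines D j)) \<le> 100 * N ^ 4 / t ^ 3"
    using t by (simp add: field_simps power2_eq_square power3_eq_cube power4_eq_xxxx)
  also have "\<dots> \<le> 100 * N ^ 4 / (real j / 2) ^ 3"
    using t assms(2) by (intro divide_left_mono power_mono mult_pos_pos) auto
  finally show ?thesis unfolding N_def by (simp add: field_simps)
qed

lemma harm_le_1_plus_ln: "harm n \<le> 1 + ln (real n)"
proof (cases "n = 0")
  case False
  then show ?thesis
    using euler_mascheroni_sequence_decreasing[of 1 n] by (simp add: harm_def)
qed (simp add: harm_def)

lemma cube_le_sum_squares: "real k ^ 3 \<le> (\<Sum>j=1..k. 3 * real j ^ 2)"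
proof (induction k)
  case (Suc k)
  have "real (Suc k) ^ 3 \<le> real k ^ 3 + 3 * real (Suc k) ^ 2"
    by (simp add: power3_eq_cube power2_eq_square algebra_simps)
  with Suc show ?case by simp
qed simp

lemma card_rich_lines_max_le:
  assumes "finite D" "1 \<le> j"
  shows "3 * real j ^ 2 * real (card (rich_lines D (max 2 j))) \<le> 2400 * real (card D) ^ 4 / real j"
proof -
  have "real (card (rich_lines D (max 2 j))) \<le> 800 * real (card D) ^ 4 / real (max 2 j) ^ 3"
    using card_rich_lines_le[OF assms(1), of "max 2 j"] by simp
  also have "\<dots> \<le> 800 * real (card D) ^ 4 / real j ^ 3"
    using assms(2) by (intro divide_left_mono power_mono mult_pos_pos) auto
  finally have "3 * real j ^ 2 * real (card (rich_lines D (max 2 j)))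
      \<le> 3 * real j ^ 2 * (800 * real (card D) ^ 4 / real j ^ 3)"
    by (intro mult_left_mono) auto
  also have "\<dots> = 2400 * real (card D) ^ 4 / real j"
    using assms(2) by (simp add: field_simps power2_eq_square power3_eq_cube)
  finally show ?thesis .
qed

lemma sum_cube_card_line_section_le:
  assumes "finite D"
  shows "(\<Sum>p\<in>rich_lines D 2. real (card (line_section D (fst p) (snd p))) ^ 3)
           \<le> 2400 * real (card D) ^ 4 * (1 + ln (real (card D)))"
proof -
  define N where "N = card D"
  define L where "L = rich_lines D 2"
  define k where "k p = card (line_section D (fst p) (snd p))" for p
  have k_le: "k p \<le> N" for p
    unfolding k_def N_def using card_line_section_le[OF assms] .
  \<comment> \<open>Layer-cake decomposition: a line with \<open>k\<close> points contributes \<open>3 j\<^sup>2\<close> for each \<open>j \<le> k\<close>.\<close>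
  have layer: "real (k p) ^ 3 \<le> (\<Sum>j=1..N. if j \<le> k p then 3 * real j ^ 2 else 0)" for p
  proof -
    have "{j \<in> {1..N}. j \<le> k p} = {1..k p}" using k_le[of p] by auto
    then show ?thesis
      using cube_le_sum_squares[of "k p"] sum.inter_filter[of "{1..N}" "\<lambda>j. 3 * real j ^ 2" "\<lambda>j. j \<le> k p"]
      by simp
  qed
  have level: "{p \<in> L. j \<le> k p} = rich_lines D (max 2 j)" for j
    unfolding L_def rich_lines_def k_def by auto
  have "(\<Sum>p\<in>L. real (k p) ^ 3) \<le> (\<Sum>p\<in>L. \<Sum>j=1..N. if j \<le> k p then 3 * real j ^ 2 else 0)"
    by (intro sum_mono layer)
  also have "\<dots> = (\<Sum>j=1..N. 3 * real j ^ 2 * real (card (rich_lines D (max 2 j))))"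
    using finite_rich_lines[OF assms, of 2, folded L_def]
    by (subst sum.swap) (simp add: sum.If_cases Int_def level mult.commute)
  also have "\<dots> \<le> (\<Sum>j=1..N. 2400 * real N ^ 4 / real j)"
    unfolding N_def by (intro sum_mono card_rich_lines_max_le[OF assms]) simp
  also have "\<dots> = 2400 * real N ^ 4 * harm N"
    by (simp add: harm_def sum_distrib_left divide_inverse)
  also have "\<dots> \<le> 2400 * real N ^ 4 * (1 + ln (real N))"
    by (intro mult_left_mono harm_le_1_plus_ln) auto
  finally show ?thesis unfolding L_def k_def N_def .
qed

definition coincidences :: "('a \<Rightarrow> 'b) \<Rightarrow> 'a set \<Rightarrow> ('a \<times> 'a) set" where
  "coincidences f S = {(x, y). x \<in> S \<and> y \<in> S \<and> f x = f y}"

lemma card_UN_fibre_products: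
  assumes "finite V" "\<And>v. finite (F v)" "\<And>v. finite (G v)"
    and "\<And>v w. v \<noteq> w \<Longrightarrow> F v \<inter> F w = {}"
  shows "card (\<Union>v\<in>V. F v \<times> G v) = (\<Sum>v\<in>V. card (F v) * card (G v))"
  using assms by (subst card_UN_disjoint) (auto simp: card_cartesian_product, blast)

lemma card_matching_pairs_le:
  assumes "finite S" "finite T"
  shows "real (card {(x, y). x \<in> S \<and> y \<in> T \<and> f x = g y})
           \<le> sqrt (real (card (coincidences f S))) * sqrt (real (card (coincidences g T)))"
proof -
  define V where "V = f ` S"
  define fS where "fS v = {x \<in> S. f x = v}" for v
  define fT where "fT v = {y \<in> T. g y = v}" for v
  have fin: "finite V" "finite (fS v)" "finite (fT v)" for v
    using assms unfolding V_def fS_def fT_def by auto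
  have disjoint: "fS v \<inter> fS w = {}" "fT v \<inter> fT w = {}" if "v \<noteq> w" for v w
    using that unfolding fS_def fT_def by auto
  have "{(x, y). x \<in> S \<and> y \<in> T \<and> f x = g y} = (\<Union>v\<in>V. fS v \<times> fT v)"
    unfolding V_def fS_def fT_def by auto
  then have "real (card {(x, y). x \<in> S \<and> y \<in> T \<and> f x = g y})
      = (\<Sum>v\<in>V. \<bar>real (card (fS v))\<bar> * \<bar>real (card (fT v))\<bar>)"
    using card_UN_fibre_products[of V fS fT] fin disjoint by simp
  also have "\<dots> \<le> L2_set (\<lambda>v. real (card (fS v))) V * L2_set (\<lambda>v. real (card (fT v))) V"
    by (rule L2_set_mult_ineq)
  also have "L2_set (\<lambda>v. real (card (fS v))) V = sqrt (real (card (coincidences f S)))"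
  proof -
    have "coincidences f S = (\<Union>v\<in>V. fS v \<times> fS v)"
      unfolding coincidences_def V_def fS_def by auto
    then show ?thesis using card_UN_fibre_products[of V fS fS] fin disjoint by (simp add: L2_set_def power2_eq_square)
  qed
  also have "L2_set (\<lambda>v. real (card (fT v))) V \<le> sqrt (real (card (coincidences g T)))"
  proof -
    have "(\<Union>v\<in>V. fT v \<times> fT v) \<subseteq> coincidences g T"
      unfolding coincidences_def fT_def by auto
    moreover have "finite (coincidences g T)"
      unfolding coincidences_def by (rule finite_subset[of _ "T \<times> T"]) (use assms in auto)
    ultimately have "card (\<Union>v\<in>V. fT v \<times> fT v) \<le> card (coincidences g T)"
      by (rule card_mono[rotated])
    then have "(\<Sum>v\<in>V. card (fT v) * card (fT v)) \<le> card (coincidences g T)"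
      using card_UN_fibre_products[of V fT fT] fin disjoint by simp
    then have "real (\<Sum>v\<in>V. card (fT v) * card (fT v)) \<le> real (card (coincidences g T))"
      by (simp only: of_nat_le_iff)
    then show ?thesis by (simp add: L2_set_def power2_eq_square)
  qed
  finally show ?thesis by (simp add: mult_left_mono)
qed

definition shift_triples :: "real set \<Rightarrow> real set \<Rightarrow> (real \<times> real \<times> real) set" where
  "shift_triples A C = {(a, c, c'). a \<in> A \<and> c \<in> C \<and> c' \<in> C \<and> c \<noteq> a \<and> c' \<noteq> a}"

definition shifted_ratio :: "real \<times> real \<times> real \<Rightarrow> real" where
  "shifted_ratio = (\<lambda>(a, c, c'). (c - a) / (c' - a))"

lemma equal_shifted_ratios_affine:
  assumes "c \<noteq> a" "c' \<noteq> a" "d \<noteq> e" "d' \<noteq> e"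
    and "shifted_ratio (a, c, c') = shifted_ratio (e, d, d')"
  obtains s b where "s \<noteq> 0" "e = s * a + b" "d = s * c + b" "d' = s * c' + b"
proof
  define s where "s = (d' - e) / (c' - a)"
  show "s \<noteq> 0" "e = s * a + (e - s * a)" using assms unfolding s_def by auto
  have "s * (c' - a) = d' - e" using assms(2) unfolding s_def by simp
  then show "d' = s * c' + (e - s * a)" by (simp add: algebra_simps)
  have "(c - a) * (d' - e) = (d - e) * (c' - a)"
    using assms unfolding shifted_ratio_def by (simp add: field_simps)
  then have "s * (c - a) = d - e" using assms(2) unfolding s_def by (simp add: field_simps)
  then show "d = s * c + (e - s * a)" by (simp add: algebra_simps)
qed

text \<open>A coincidence of ratios is determined by the rich line through its three grid points
  together with their first coordinates.\<close>

lemma card_coincidences_shifted_ratio_le: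
  assumes "finite A" "finite C"
  shows "real (card (coincidences shifted_ratio (shift_triples A C)))
           \<le> (\<Sum>p\<in>rich_lines (A \<union> C) 2. real (card (line_section (A \<union> C) (fst p) (snd p))) ^ 3)"
proof -
  define D where "D = A \<union> C"
  define X where "X p = line_section D (fst p) (snd p)" for p
  define aff where "aff p = (\<lambda>(x, y, z). (fst p * x + snd p, fst p * y + snd p, fst p * z + snd p))"
    for p :: "real \<times> real"
  have finD: "finite D" using assms unfolding D_def by simp
  have finX: "finite (X p)" for p using finD unfolding X_def line_section_def by simp
  have finL: "finite (rich_lines D 2)" using finite_rich_lines[OF finD] by simp
  have "coincidences shifted_ratio (shift_triples A C)
      \<subseteq> (\<Union>p\<in>rich_lines D 2. (\<lambda>t. (t, aff p t)) ` (X p \<times> X p \<times> X p))"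
  proof
    fix q assume "q \<in> coincidences shifted_ratio (shift_triples A C)"
    then obtain a c c' e d d' where q: "q = ((a, c, c'), (e, d, d'))"
      and mem: "a \<in> A" "c \<in> C" "c' \<in> C" "e \<in> A" "d \<in> C" "d' \<in> C"
      and ne: "c \<noteq> a" "c' \<noteq> a" "d \<noteq> e" "d' \<noteq> e"
      and ratio: "shifted_ratio (a, c, c') = shifted_ratio (e, d, d')"
      unfolding coincidences_def shift_triples_def by auto
    obtain s b where sb: "s \<noteq> 0" "e = s * a + b" "d = s * c + b" "d' = s * c' + b"
      using equal_shifted_ratios_affine[OF ne ratio] .
    have on_line: "a \<in> X (s, b)" "c \<in> X (s, b)" "c' \<in> X (s, b)"
      using mem sb unfolding X_def line_section_def D_def by auto
    then have "card {a, c'} \<le> card (X (s, b))" using finX by (intro card_mono) auto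
    with ne(2) have "2 \<le> card (X (s, b))" by simp
    with sb(1) have "(s, b) \<in> rich_lines D 2" unfolding rich_lines_def X_def by simp
    moreover have "q = (\<lambda>t. (t, aff (s, b) t)) (a, c, c')" using q sb unfolding aff_def by simp
    ultimately show "q \<in> (\<Union>p\<in>rich_lines D 2. (\<lambda>t. (t, aff p t)) ` (X p \<times> X p \<times> X p))"
      using on_line by blast
  qed
  then have "card (coincidences shifted_ratio (shift_triples A C))
      \<le> card (\<Union>p\<in>rich_lines D 2. (\<lambda>t. (t, aff p t)) ` (X p \<times> X p \<times> X p))"
    using finL finX by (intro card_mono) auto
  also have "\<dots> \<le> (\<Sum>p\<in>rich_lines D 2. card ((\<lambda>t. (t, aff p t)) ` (X p \<times> X p \<times> X p)))"
    using finL by (rule card_UN_le)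
  also have "\<dots> \<le> (\<Sum>p\<in>rich_lines D 2. card (X p) ^ 3)"
    by (intro sum_mono order_trans[OF card_image_le])
      (simp_all add: finX card_cartesian_product power3_eq_cube)
  finally have "real (card (coincidences shifted_ratio (shift_triples A C)))
      \<le> real (\<Sum>p\<in>rich_lines D 2. card (X p) ^ 3)"
    by (simp only: of_nat_le_iff)
  then show ?thesis unfolding D_def X_def by simp
qed

lemma card_coincidences_quotient_le_mult_energy:
  assumes "finite B"
  shows "card (coincidences (\<lambda>(x, y). x / y) ((B - {0}) \<times> (B - {0}))) \<le> mult_energy B B"
proof -
  define Q where "Q = coincidences (\<lambda>(x, y). x / y) ((B - {0}) \<times> (B - {0}))"
  define E where "E = {(x1, x2, y1, y2). x1 \<in> B \<and> x2 \<in> B \<and> y1 \<in> B \<and> y2 \<in> B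
      \<and> y1 \<noteq> 0 \<and> y2 \<noteq> 0 \<and> x1 / y1 = x2 / y2}"
  define reorder where "reorder = (\<lambda>((x1, y1), (x2, y2)). (x1 :: real, x2 :: real, y1 :: real, y2 :: real))"
  have "inj_on reorder Q" unfolding reorder_def by (rule inj_onI) auto
  then have "card Q = card (reorder ` Q)" by (rule card_image[symmetric])
  also have "\<dots> \<le> card E"
  proof (rule card_mono)
    show "finite E" unfolding E_def by (rule finite_subset[of _ "B \<times> B \<times> B \<times> B"]) (use assms in auto)
    show "reorder ` Q \<subseteq> E" unfolding reorder_def Q_def E_def coincidences_def by auto
  qed
  finally show ?thesis unfolding Q_def E_def mult_energy_def .
qed

definition shift_solutions :: "real set \<Rightarrow> real set \<Rightarrow> real \<Rightarrow> (real \<times> real \<times> real \<times> real) set" where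
  "shift_solutions B C a = {(x1, x2, c1, c2). x1 \<in> B \<and> x2 \<in> B \<and> c1 \<in> C \<and> c2 \<in> C
      \<and> c1 \<noteq> a \<and> c2 \<noteq> a \<and> x1 / (c1 - a) = x2 / (c2 - a)}"

lemma finite_shift_solutions: "finite B \<Longrightarrow> finite C \<Longrightarrow> finite (shift_solutions B C a)"
  unfolding shift_solutions_def by (rule finite_subset[of _ "B \<times> B \<times> C \<times> C"]) auto

lemma mult_energy_shift: "mult_energy B ((\<lambda>c. c - a) ` C) = card (shift_solutions B C a)"
proof -
  define unshift where "unshift = (\<lambda>(x1, x2, c1, c2). (x1 :: real, x2 :: real, c1 - a, c2 - a))"
  have "inj_on unshift (shift_solutions B C a)" unfolding unshift_def by (rule inj_onI) auto
  moreover have "{(x1, x2, y1, y2). x1 \<in> B \<and> x2 \<in> B \<and> y1 \<in> (\<lambda>c. c - a) ` C \<and> y2 \<in> (\<lambda>c. c - a) ` C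
      \<and> y1 \<noteq> 0 \<and> y2 \<noteq> 0 \<and> x1 / y1 = x2 / y2} = unshift ` shift_solutions B C a"
  proof (intro equalityI subsetI)
    fix q assume "q \<in> {(x1, x2, y1, y2). x1 \<in> B \<and> x2 \<in> B \<and> y1 \<in> (\<lambda>c. c - a) ` C
      \<and> y2 \<in> (\<lambda>c. c - a) ` C \<and> y1 \<noteq> 0 \<and> y2 \<noteq> 0 \<and> x1 / y1 = x2 / y2}"
    then obtain x1 x2 c1 c2 where "q = (x1, x2, c1 - a, c2 - a)" "(x1, x2, c1, c2) \<in> shift_solutions B C a"
      unfolding shift_solutions_def by auto
    then show "q \<in> unshift ` shift_solutions B C a" unfolding unshift_def by (auto intro: rev_image_eqI)
  qed (auto simp: unshift_def shift_solutions_def)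
  ultimately show ?thesis unfolding mult_energy_def by (simp add: card_image)
qed

lemma sum_mult_energy_shift_eq_card:
  assumes "finite A" "finite B" "finite C"
  shows "(\<Sum>a\<in>A. real (mult_energy B ((\<lambda>c. c - a) ` C)))
           = real (card (SIGMA a:A. shift_solutions B C a))"
  using assms by (simp add: mult_energy_shift card_SigmaI finite_shift_solutions)

lemma sum_mult_energy_shift_le_trivial:
  assumes "finite A" "finite B" "finite C"
  shows "(\<Sum>a\<in>A. real (mult_energy B ((\<lambda>c. c - a) ` C)))
           \<le> real (card A) * real (card B) ^ 2 * real (card C) ^ 2"
proof -
  have "card (shift_solutions B C a) \<le> card (B \<times> B \<times> C \<times> C)" for a
    using assms unfolding shift_solutions_def by (intro card_mono) auto
  then have "(\<Sum>a\<in>A. real (mult_energy B ((\<lambda>c. c - a) ` C))) \<le> (\<Sum>a\<in>A. real (card (B \<times> B \<times> C \<times> C)))"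
    unfolding mult_energy_shift by (intro sum_mono) simp
  then show ?thesis by (simp add: card_cartesian_product power2_eq_square)
qed

lemma card_shift_solutions_zero_le:
  assumes "finite A" "finite C"
  shows "card {q \<in> SIGMA a:A. shift_solutions B C a. fst (snd q) = 0} \<le> card A * card C ^ 2"
proof -
  have "{q \<in> SIGMA a:A. shift_solutions B C a. fst (snd q) = 0}
      \<subseteq> (\<lambda>(a, c1, c2). (a, 0, 0, c1, c2)) ` (A \<times> C \<times> C)"
  proof
    fix q assume "q \<in> {q \<in> SIGMA a:A. shift_solutions B C a. fst (snd q) = 0}"
    then obtain a x2 c1 c2 where q: "q = (a, 0, x2, c1, c2)" "a \<in> A" "c1 \<in> C" "c2 \<in> C" "c2 \<noteq> a"
      "0 = x2 / (c2 - a)"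
      unfolding shift_solutions_def by auto
    then have "x2 = 0" by simp
    with q show "q \<in> (\<lambda>(a, c1, c2). (a, 0, 0, c1, c2)) ` (A \<times> C \<times> C)" by force
  qed
  then have "card {q \<in> SIGMA a:A. shift_solutions B C a. fst (snd q) = 0} \<le> card (A \<times> C \<times> C)"
    using assms by (meson card_image_le card_mono finite_SigmaI finite_imageI order_trans)
  then show ?thesis by (simp add: card_cartesian_product power2_eq_square)
qed

lemma card_shift_solutions_nonzero_le:
  assumes "finite A" "finite B" "finite C"
  shows "real (card {q \<in> SIGMA a:A. shift_solutions B C a. fst (snd q) \<noteq> 0})
           \<le> sqrt (real (mult_energy B B)) * sqrt (real (card (coincidences shifted_ratio (shift_triples A C))))"
proof -
  define S where "S = {q \<in> SIGMA a:A. shift_solutions B C a. fst (snd q) \<noteq> 0}"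
  define M where "M = {(p, t). p \<in> (B - {0}) \<times> (B - {0}) \<and> t \<in> shift_triples A C
      \<and> (\<lambda>(x, y). x / y) p = shifted_ratio t}"
  define regroup where "regroup = (\<lambda>(a :: real, x1 :: real, x2 :: real, c1 :: real, c2 :: real). ((x1, x2), (a, c1, c2)))"
  have "inj_on regroup S" unfolding regroup_def by (rule inj_onI) auto
  moreover have "regroup ` S \<subseteq> M"
  proof
    fix r assume "r \<in> regroup ` S"
    then obtain a x1 x2 c1 c2 where r: "r = ((x1, x2), (a, c1, c2))" "a \<in> A" "x1 \<in> B" "x2 \<in> B"
      "c1 \<in> C" "c2 \<in> C" "c1 \<noteq> a" "c2 \<noteq> a" "x1 \<noteq> 0" "x1 / (c1 - a) = x2 / (c2 - a)"
      unfolding S_def regroup_def shift_solutions_def by auto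
    then have "x2 \<noteq> 0" by auto
    with r have "x1 / x2 = (c1 - a) / (c2 - a)" by (simp add: field_simps)
    with r \<open>x2 \<noteq> 0\<close> show "r \<in> M" unfolding M_def shift_triples_def shifted_ratio_def by simp
  qed
  moreover have "finite M"
    unfolding M_def shift_triples_def
    by (rule finite_subset[of _ "(B \<times> B) \<times> (A \<times> C \<times> C)"]) (use assms in auto)
  ultimately have "card S \<le> card M" by (metis card_image card_mono)
  then have "real (card S) \<le> real (card M)" by simp
  also have "\<dots> \<le> sqrt (real (card (coincidences (\<lambda>(x, y). x / y) ((B - {0}) \<times> (B - {0})))))
      * sqrt (real (card (coincidences shifted_ratio (shift_triples A C))))"
    unfolding M_def
    by (rule card_matching_pairs_le) (use assms in \<open>auto simp: shift_triples_def intro: finite_subset[of _ "A \<times> C \<times> C"]\<close>)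
  also have "\<dots> \<le> sqrt (real (mult_energy B B)) * sqrt (real (card (coincidences shifted_ratio (shift_triples A C))))"
    using card_coincidences_quotient_le_mult_energy[OF assms(2)] by (intro mult_right_mono) auto
  finally show ?thesis unfolding S_def .
qed

lemma sum_mult_energy_shift_le:
  assumes "finite A" "finite B" "finite C"
  shows "(\<Sum>a\<in>A. real (mult_energy B ((\<lambda>c. c - a) ` C)))
           \<le> real (card A) * real (card C) ^ 2
             + sqrt (real (mult_energy B B)) * sqrt (real (card (coincidences shifted_ratio (shift_triples A C))))"
proof -
  define S where "S = (SIGMA a:A. shift_solutions B C a)"
  define S0 where "S0 = {q \<in> S. fst (snd q) = 0}"
  define S1 where "S1 = {q \<in> S. fst (snd q) \<noteq> 0}"
  have "S0 \<union> S1 = S" unfolding S0_def S1_def by blast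
  then have "card S \<le> card S0 + card S1" by (metis card_Un_le)
  then have "real (card S) \<le> real (card S0) + real (card S1)" by (metis of_nat_add of_nat_le_iff)
  moreover have "real (card S0) \<le> real (card A * card C ^ 2)"
    using card_shift_solutions_zero_le[OF assms(1,3), of B] unfolding S0_def S_def
    by (simp only: of_nat_le_iff)
  moreover have "real (card S1)
      \<le> sqrt (real (mult_energy B B)) * sqrt (real (card (coincidences shifted_ratio (shift_triples A C))))"
    using card_shift_solutions_nonzero_le[OF assms] unfolding S1_def S_def .
  ultimately show ?thesis unfolding sum_mult_energy_shift_eq_card[OF assms] S_def by simp
qed

lemma power4_ln_le_power4_log2:
  fixes c2 :: real and n N :: nat
  assumes "c2 > 0" "2 \<le> n" "n \<le> N" "real N \<le> (1 + c2) * real n"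
  shows "real N ^ 4 * (1 + ln (real N)) \<le> (1 + c2) ^ 4 * (2 + ln (1 + c2)) * real n ^ 4 * log 2 (real n)"
proof -
  have n: "1 \<le> log 2 (real n)" "0 < real n" using assms(2) by auto
  have "ln (real N) \<le> ln ((1 + c2) * real n)" using assms by simp
  also have "\<dots> = ln (1 + c2) + ln (real n)" using assms(1) n by (simp add: ln_mult)
  also have "ln (real n) \<le> log 2 (real n)"
    using n ln_2_less_1 by (simp add: log_def divide_le_cancel le_divide_eq mult_left_le)
  finally have "1 + ln (real N) \<le> (1 + ln (1 + c2)) * 1 + log 2 (real n)" by simp
  also have "\<dots> \<le> (1 + ln (1 + c2)) * log 2 (real n) + log 2 (real n)"
    using n assms(1) by (intro add_right_mono mult_left_mono) auto
  finally have log_bound: "1 + ln (real N) \<le> (2 + ln (1 + c2)) * log 2 (real n)"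
    by (simp add: algebra_simps)
  have "real N ^ 4 \<le> ((1 + c2) * real n) ^ 4" using assms(4) by (intro power_mono) auto
  moreover have "0 \<le> 1 + ln (real N)" using assms(2,3) by simp
  ultimately have "real N ^ 4 * (1 + ln (real N)) \<le> ((1 + c2) * real n) ^ 4 * ((2 + ln (1 + c2)) * log 2 (real n))"
    using log_bound by (intro mult_mono) auto
  then show ?thesis by (simp add: power_mult_distrib ac_simps)
qed

lemma sum_mult_energy_shift_le_large:
  fixes c2 :: real
  defines "K \<equiv> 2400 * (1 + c2) ^ 4 * (2 + ln (1 + c2))"
  assumes "finite A" "finite B" "finite C" "c2 > 0"
    and "2 \<le> card A" "real (card C) \<le> c2 * real (card A)"
  shows "(\<Sum>a\<in>A. real (mult_energy B ((\<lambda>c. c - a) ` C)))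
           \<le> c2 ^ 2 * real (card A) ^ 3
             + sqrt K * (sqrt (real (mult_energy B B)) * real (card A) ^ 2 * sqrt (log 2 (real (card A))))"
proof -
  define n where "n = real (card A)"
  define N where "N = card (A \<union> C)"
  have N: "card A \<le> N" "real N \<le> (1 + c2) * n"
    using assms card_Un_le[of A C] unfolding N_def n_def by (auto intro: card_mono simp: algebra_simps)
  have "(\<Sum>p\<in>rich_lines (A \<union> C) 2. real (card (line_section (A \<union> C) (fst p) (snd p))) ^ 3)
      \<le> 2400 * (real N ^ 4 * (1 + ln (real N)))"
    using sum_cube_card_line_section_le[of "A \<union> C"] assms(2,4) unfolding N_def by simp
  also have "\<dots> \<le> K * (n ^ 2) ^ 2 * log 2 n"
    using power4_ln_le_power4_log2[OF assms(5,6) N[unfolded n_def]] unfolding K_def n_def by simp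
  finally have "sqrt (real (card (coincidences shifted_ratio (shift_triples A C))))
      \<le> sqrt (K * (n ^ 2) ^ 2 * log 2 n)"
    using card_coincidences_shifted_ratio_le[OF assms(2,4)] by simp
  also have "\<dots> = sqrt K * sqrt ((n ^ 2) ^ 2) * sqrt (log 2 n)" by (simp only: real_sqrt_mult)
  also have "\<dots> = sqrt K * n ^ 2 * sqrt (log 2 n)" by (simp only: real_sqrt_abs abs_power2)
  finally have coincidences: "sqrt (real (card (coincidences shifted_ratio (shift_triples A C))))
      \<le> sqrt K * n ^ 2 * sqrt (log 2 n)" .
  have "real (card C) ^ 2 \<le> (c2 * n) ^ 2" using assms(7) unfolding n_def by (intro power_mono) auto
  then have "n * real (card C) ^ 2 \<le> n * (c2 * n) ^ 2" by (intro mult_left_mono) (auto simp: n_def)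
  also have "\<dots> = c2 ^ 2 * n ^ 3" by (simp add: algebra_simps power2_eq_square power3_eq_cube)
  finally have "n * real (card C) ^ 2 \<le> c2 ^ 2 * n ^ 3" .
  have "(\<Sum>a\<in>A. real (mult_energy B ((\<lambda>c. c - a) ` C)))
      \<le> n * real (card C) ^ 2
        + sqrt (real (mult_energy B B)) * sqrt (real (card (coincidences shifted_ratio (shift_triples A C))))"
    unfolding n_def by (rule sum_mult_energy_shift_le[OF assms(2-4)])
  also have "\<dots> \<le> c2 ^ 2 * n ^ 3 + sqrt (real (mult_energy B B)) * (sqrt K * n ^ 2 * sqrt (log 2 n))"
    using \<open>n * real (card C) ^ 2 \<le> c2 ^ 2 * n ^ 3\<close> coincidences by (intro add_mono mult_left_mono) auto
  finally show ?thesis unfolding n_def by (simp add: ac_simps)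
qed

lemma sum_mult_energy_shift_le_small:
  assumes "finite A" "finite B" "finite C"
    and "card A \<le> 1" "real (card C) \<le> c2 * real (card A)"
  shows "(\<Sum>a\<in>A. real (mult_energy B ((\<lambda>c. c - a) ` C)))
           \<le> c2 ^ 2 * (real (card A) * real (card B) ^ 2)"
proof -
  define n where "n = real (card A)"
  have "real (card C) ^ 2 \<le> (c2 * n) ^ 2" using assms(5) unfolding n_def by (intro power_mono) auto
  then have "n * real (card C) ^ 2 \<le> n * (c2 * n) ^ 2" by (intro mult_left_mono) (auto simp: n_def)
  also have "\<dots> = c2 ^ 2 * n ^ 3" by (simp add: algebra_simps power2_eq_square power3_eq_cube)
  also have "\<dots> \<le> c2 ^ 2 * n"
  proof -
    have "n ^ 3 \<le> n" using assms(4) unfolding n_def by (cases "card A") auto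
    then show ?thesis by (intro mult_left_mono) auto
  qed
  finally have "n * real (card C) ^ 2 * real (card B) ^ 2 \<le> c2 ^ 2 * n * real (card B) ^ 2"
    by (intro mult_right_mono) auto
  with sum_mult_energy_shift_le_trivial[OF assms(1-3)] show ?thesis
    unfolding n_def by (simp add: ac_simps)
qed

lemma sum_mult_energy_shift_le_bound:
  fixes c2 :: real
  defines "K \<equiv> 2400 * (1 + c2) ^ 4 * (2 + ln (1 + c2))"
  assumes "finite A" "finite B" "finite C" "c2 > 0" "real (card C) \<le> c2 * real (card A)"
  shows "(\<Sum>a\<in>A. real (mult_energy B ((\<lambda>c. c - a) ` C)))
           \<le> (c2 ^ 2 + sqrt K) * (sqrt (real (mult_energy B B)) * real (card A) ^ 2 * sqrt (log 2 (real (card A)))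
              + real (card A) ^ 3 + real (card A) * real (card B) ^ 2)"
proof -
  define X where "X = sqrt (real (mult_energy B B)) * real (card A) ^ 2 * sqrt (log 2 (real (card A)))"
  define Y where "Y = real (card A) ^ 3"
  define Z where "Z = real (card A) * real (card B) ^ 2"
  have "0 \<le> log 2 (real (card A))" by (cases "card A") (auto simp: log_def)
  then have "0 \<le> X" "0 \<le> Y" "0 \<le> Z" unfolding X_def Y_def Z_def by auto
  moreover have "0 \<le> sqrt K"
    using assms(5) ln_ge_zero[of "1 + c2"] unfolding K_def by simp
  ultimately have nonneg: "0 \<le> c2 ^ 2 * X" "0 \<le> c2 ^ 2 * Y" "0 \<le> c2 ^ 2 * Z"
    "0 \<le> sqrt K * X" "0 \<le> sqrt K * Y" "0 \<le> sqrt K * Z" by auto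
  consider "card A \<le> 1" | "2 \<le> card A" by linarith
  then have "(\<Sum>a\<in>A. real (mult_energy B ((\<lambda>c. c - a) ` C))) \<le> c2 ^ 2 * Z
      \<or> (\<Sum>a\<in>A. real (mult_energy B ((\<lambda>c. c - a) ` C))) \<le> c2 ^ 2 * Y + sqrt K * X"
    using sum_mult_energy_shift_le_small[OF assms(2-4) _ assms(6)]
      sum_mult_energy_shift_le_large[OF assms(2-5) _ assms(6)]
    unfolding X_def Y_def Z_def K_def by cases auto
  with nonneg show ?thesis
    unfolding X_def[symmetric] Y_def[symmetric] Z_def[symmetric] distrib_left distrib_right by linarith
qed

theorem lemma3p1:
  fixes c1 c2 :: real
  assumes "c1 > 0" and "c2 > 0"
  shows "\<exists>K>0. \<forall>A B C :: real set.
     finite A \<and> finite B \<and> finite C \<and>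
     real (card A) \<le> c1 * real (card C) \<and> real (card C) \<le> c2 * real (card A) \<longrightarrow>
     (\<Sum>a\<in>A. real (mult_energy B ((\<lambda>c. c - a) ` C)))
       \<le> K * (sqrt (real (mult_energy B B)) * real (card A) ^ 2 * sqrt (log 2 (real (card A)))
              + real (card A) ^ 3 + real (card A) * real (card B) ^ 2)"
proof -
  define K where "K = 2400 * (1 + c2) ^ 4 * (2 + ln (1 + c2))"
  show ?thesis
  proof (intro exI[of _ "c2 ^ 2 + sqrt K"] conjI allI impI)
    show "0 < c2 ^ 2 + sqrt K"
      using assms(2) ln_ge_zero[of "1 + c2"] unfolding K_def by (simp add: add_pos_nonneg)
    fix A B C :: "real set"
    assume "finite A \<and> finite B \<and> finite C \<and>
      real (card A) \<le> c1 * real (card C) \<and> real (card C) \<le> c2 * real (card A)"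
    then show "(\<Sum>a\<in>A. real (mult_energy B ((\<lambda>c. c - a) ` C)))
       \<le> (c2 ^ 2 + sqrt K) * (sqrt (real (mult_energy B B)) * real (card A) ^ 2 * sqrt (log 2 (real (card A)))
              + real (card A) ^ 3 + real (card A) * real (card B) ^ 2)"
      unfolding K_def using sum_mult_energy_shift_le_bound[OF _ _ _ assms(2)] by blast
  qed
qed

end
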